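(* Let $n\geq 0$ and $k\geq 3$ be integers. Then $f_k(n)=n$.
   Context: $\Sigma_k=\{0,1,\ldots,k-1\}$. A border of a word $w$ is a non-empty word that is both a proper prefix and a proper suffix of $w$; $w$ is unbordered if it has no border. A border $u$ of $w$ is non-overlapping if $|u|\le |w|/2$. The smallest BP-factorization of a word $w$ is the factorization $w=w_m\cdots w_1w_0w_1\cdots w_m$ ($m\ge 0$) in which, for each $i\ge 1$, $w_i$ is the longest non-overlapping border of $w_i\cdots w_1w_0w_1\cdots w_i$, and $w_0$ is either empty or unbordered (i.e., one repeatedly removes the longest non-overlapping border from both ends until an empty or unbordered central word remains). Its width is $2m+1$ if $w_0$ is non-empty and $2m$ if $w_0$ is empty. $f_k(n)$ denotes the maximum width of the smallest BP-factorization over all length-$n$ words over $\Sigma_k$. *)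

theory Defs
  imports Main "HOL-Library.Sublist"
begin

definition border :: "'a list \<Rightarrow> 'a list \<Rightarrow> bool" where
  "border u w \<longleftrightarrow> u \<noteq> [] \<and> u \<noteq> w \<and> prefix u w \<and> suffix u w"

definition unbordered :: "'a list \<Rightarrow> bool" where
  "unbordered w \<longleftrightarrow> \<not> (\<exists>u. border u w)"

definition nonoverlapping_border :: "'a list \<Rightarrow> 'a list \<Rightarrow> bool" where
  "nonoverlapping_border u w \<longleftrightarrow> border u w \<and> 2 * length u \<le> length w"

definition lnob_len :: "'a list \<Rightarrow> nat" where
  "lnob_len w = Max {length u | u. nonoverlapping_border u w}"

lemma border_shorter:
  assumes "border u w" "2 * length u > length w"
  shows "\<exists>v. border v w \<and> length v < length u"
proof -
  let ?p = "length w - length u" and ?m = "2 * length u - length w"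
  from assms have pw: "prefix u w" "suffix u w" "u \<noteq> []" "u \<noteq> w" by (auto simp: border_def)
  have lu: "length u < length w"
    using pw by (simp add: prefix_length_less strict_prefix_def)
  have u1: "u = take (length u) w" using pw(1) by (metis append_eq_conv_conj prefixE)
  have u2: "u = drop ?p w" using pw(2) by (metis suffix_take drop_take append_take_drop_id suffixE
        append_eq_conv_conj diff_add_inverse length_append length_drop)
  have per: "w ! i = w ! (i + ?p)" if "i < length u" for i
  proof -
    have "u ! i = w ! i" using u1 that by (metis nth_take)
    moreover have "u ! i = w ! (?p + i)" using u2 that lu by (metis nth_drop less_imp_le_nat diff_le_self)
    ultimately show ?thesis by (simp add: add.commute)
  qed
  define v where "v = take ?m w"
  have lv: "length v = ?m" using assms lu by (simp add: v_def)
  have "v \<noteq> []" using lv assms lu by auto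
  moreover have "v \<noteq> w" using lv assms lu by auto
  moreover have "prefix v w" by (simp add: v_def take_is_prefix)
  moreover have "suffix v w"
  proof -
    have "drop (length w - ?m) w = v"
    proof (rule nth_equalityI)
      show "length (drop (length w - ?m) w) = length v" using lv assms lu by simp
      fix j assume "j < length (drop (length w - ?m) w)"
      hence j: "j < ?m" using lu assms by simp
      have e: "length w - ?m = ?p + ?p" using assms lu by simp
      have "drop (length w - ?m) w ! j = w ! (?p + ?p + j)" using j lu e by (simp add: nth_drop)
      also have "\<dots> = w ! (?p + j)" using per[of "?p + j"] j lu assms by (simp add: add.commute add.left_commute)
      also have "\<dots> = w ! j" using per[of j] j lu assms by (simp add: add.commute)
      also have "\<dots> = v ! j" using j by (simp add: v_def)
      finally show "drop (length w - ?m) w ! j = v ! j" .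
    qed
    thus ?thesis by (metis suffix_drop)
  qed
  moreover have "length v < length u" using lv lu assms by simp
  ultimately show ?thesis by (auto simp: border_def)
qed

lemma border_imp_nonoverlapping:
  "border u w \<Longrightarrow> \<exists>v. nonoverlapping_border v w"
proof (induction "length u" arbitrary: u rule: less_induct)
  case less
  show ?case
  proof (cases "2 * length u \<le> length w")
    case True thus ?thesis using less.prems by (auto simp: nonoverlapping_border_def)
  next
    case False
    then obtain v where "border v w" "length v < length u"
      using border_shorter[OF less.prems] by auto
    thus ?thesis using less.hyps by blast
  qed
qed

lemma lnob_len_pos:
  assumes "\<not> unbordered w"
  shows "0 < lnob_len w" "2 * lnob_len w \<le> length w"
proof -
  let ?S = "{length u | u. nonoverlapping_border u w}"
  have fin: "finite ?S"
    by (rule finite_subset[of _ "{..length w}"]) (auto simp: nonoverlapping_border_def)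
  obtain v where v: "nonoverlapping_border v w"
    using assms border_imp_nonoverlapping by (auto simp: unbordered_def)
  hence ne: "?S \<noteq> {}" by auto
  have "Max ?S \<in> ?S" using fin ne by (rule Max_in)
  then obtain u where "nonoverlapping_border u w" "lnob_len w = length u"
    by (auto simp: lnob_len_def)
  thus "0 < lnob_len w" "2 * lnob_len w \<le> length w"
    by (auto simp: nonoverlapping_border_def border_def)
qed

text \<open>Width of the smallest BP-factorization: repeatedly remove the longest
  non-overlapping border from both ends until an empty or unbordered central word remains;
  count 2 per removal, plus 1 for a non-empty central word.\<close>
function bp_width :: "'a list \<Rightarrow> nat" where
  "bp_width w =
    (if w = [] then 0
     else if unbordered w then 1
     else 2 + bp_width (take (length w - 2 * lnob_len w) (drop (lnob_len w) w)))"
  by pat_completeness auto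
termination
proof (relation "measure length")
  fix w :: "'a list"
  assume "w \<noteq> []" "\<not> unbordered w"
  thus "(take (length w - 2 * lnob_len w) (drop (lnob_len w) w), w) \<in> measure length"
    using lnob_len_pos[of w] by auto
qed auto

declare bp_width.simps[simp del]

definition f :: "nat \<Rightarrow> nat \<Rightarrow> nat" where
  "f k n = Max {bp_width w | w :: nat list. length w = n \<and> set w \<subseteq> {0..<k}}"

end

theory Submission
  imports Defs
begin

text \<open>Each step of the BP-factorization strips at least one letter from each end and contributes 2
  to the width, while the central word contributes at most 1, so the width never exceeds the length.
  For the lower bound take, over the letters 0, 1, 2, the word \<open>\<dots>210c012\<dots>\<close> with \<open>c\<close> empty or
  a single letter. It begins with two letters decreasing mod 3, whereas every suffix of at most half
  its length begins with two letters increasing mod 3. So its longest non-overlapping border is its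
  first letter, and removing it from both ends leaves a word of the same shape: every letter is
  peeled off on its own and the width equals the length.\<close>

lemma bp_width_le_length: "bp_width w \<le> length w"
proof (induction w rule: bp_width.induct)
  case (1 w)
  show ?case
  proof (cases "w = [] \<or> unbordered w")
    case True
    then show ?thesis
      by (subst bp_width.simps) (auto simp: Suc_le_eq)
  next
    case False
    then have "0 < lnob_len w" "2 * lnob_len w \<le> length w"
      using lnob_len_pos by auto
    with False 1 show ?thesis
      by (subst bp_width.simps) simp
  qed
qed

lemma prefix_suffix_nth:
  assumes "prefix u w" "suffix u w" "t < length u"
  shows "w ! t = w ! (length w - length u + t)"
proof -
  obtain a where "w = u @ a"
    using assms(1) by (auto simp: prefix_def)
  obtain b where "w = b @ u"
    using assms(2) by (auto simp: suffix_def)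
  have "w ! t = u ! t"
    using \<open>w = u @ a\<close> assms(3) by (simp add: nth_append)
  also have "\<dots> = w ! (length w - length u + t)"
    using \<open>w = b @ u\<close> by simp
  finally show ?thesis .
qed

lemma lnob_len_eqI:
  assumes "nonoverlapping_border u w"
    and "\<And>v. nonoverlapping_border v w \<Longrightarrow> length v \<le> length u"
  shows "lnob_len w = length u"
proof -
  let ?S = "{length v | v. nonoverlapping_border v w}"
  have "?S \<subseteq> {..length u}"
    using assms(2) by auto
  then have "finite ?S"
    by (rule finite_subset) simp
  with assms show ?thesis
    unfolding lnob_len_def by (intro Max_eqI) auto
qed

lemma bp_width_Cons_snoc:
  assumes "\<And>u. nonoverlapping_border u (x # v @ [x]) \<Longrightarrow> length u \<le> 1"
  shows "bp_width (x # v @ [x]) = 2 + bp_width v"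
proof -
  let ?w = "x # v @ [x]"
  have border: "nonoverlapping_border [x] ?w"
    by (auto simp: nonoverlapping_border_def border_def suffix_def)
  then have "lnob_len ?w = 1"
    using lnob_len_eqI[OF border] assms by simp
  moreover have "\<not> unbordered ?w"
    using border by (auto simp: unbordered_def nonoverlapping_border_def)
  ultimately show ?thesis
    by (subst bp_width.simps) simp
qed

lemma bp_width_singleton: "bp_width [x] = 1"
proof -
  have "unbordered [x]"
    by (auto simp: unbordered_def border_def prefix_def Cons_eq_append_conv)
  then show ?thesis
    by (subst bp_width.simps) simp
qed

definition mod3_ramp :: "nat \<Rightarrow> nat list" where
  "mod3_ramp i = map (\<lambda>s. s mod 3) [0..<i]"

definition mirrored_ramp :: "nat \<Rightarrow> nat list \<Rightarrow> nat list" where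
  "mirrored_ramp i c = rev (mod3_ramp i) @ c @ mod3_ramp i"

lemma length_mirrored_ramp [simp]: "length (mirrored_ramp i c) = 2 * i + length c"
  by (simp add: mirrored_ramp_def mod3_ramp_def)

lemma set_mirrored_ramp: "set (mirrored_ramp i c) \<subseteq> {0..<3} \<union> set c"
  by (auto simp: mirrored_ramp_def mod3_ramp_def)

lemma mirrored_ramp_Suc: "mirrored_ramp (Suc i) c = i mod 3 # mirrored_ramp i c @ [i mod 3]"
  by (simp add: mirrored_ramp_def mod3_ramp_def)

lemma nth_mirrored_ramp_left: "t < i \<Longrightarrow> mirrored_ramp i c ! t = (i - 1 - t) mod 3"
  by (simp add: mirrored_ramp_def mod3_ramp_def nth_append rev_nth)

lemma nth_mirrored_ramp_right:
  "t < i \<Longrightarrow> mirrored_ramp i c ! (i + length c + t) = t mod 3"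
  using nth_append_length_plus[of "rev (mod3_ramp i) @ c" "mod3_ramp i" t]
  by (simp add: mirrored_ramp_def mod3_ramp_def)

lemma Suc_mod_3_eq_imp_neq: "Suc a mod 3 = b mod 3 \<Longrightarrow> a mod 3 \<noteq> Suc b mod 3" for a b :: nat
  by presburger

lemma nonoverlapping_border_mirrored_ramp:
  assumes "length c \<le> 1" "nonoverlapping_border u (mirrored_ramp i c)"
  shows "length u \<le> 1"
proof (rule ccontr)
  let ?w = "mirrored_ramp i c" and ?j = "length u"
  assume "\<not> ?j \<le> 1"
  have "?j \<le> i"
    using assms by (simp add: nonoverlapping_border_def)
  have right: "?w ! t = (i - ?j + t) mod 3" if "t < 2" for t
  proof -
    have "?w ! t = ?w ! (length ?w - ?j + t)"
      using assms(2) that \<open>\<not> ?j \<le> 1\<close>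
      by (intro prefix_suffix_nth) (auto simp: nonoverlapping_border_def border_def)
    also have "length ?w - ?j + t = i + length c + (i - ?j + t)"
      using \<open>?j \<le> i\<close> by simp
    also have "?w ! \<dots> = (i - ?j + t) mod 3"
      using that \<open>\<not> ?j \<le> 1\<close> \<open>?j \<le> i\<close> by (intro nth_mirrored_ramp_right) simp
    finally show ?thesis .
  qed
  have "Suc (i - 2) = i - 1"
    using \<open>\<not> ?j \<le> 1\<close> \<open>?j \<le> i\<close> by linarith
  then have left: "?w ! 0 = Suc (i - 2) mod 3" "?w ! 1 = (i - 2) mod 3"
    using nth_mirrored_ramp_left[of 0 i c] nth_mirrored_ramp_left[of 1 i c]
      \<open>\<not> ?j \<le> 1\<close> \<open>?j \<le> i\<close> by (simp_all add: numeral_2_eq_2)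
  have "Suc (i - 2) mod 3 = (i - ?j) mod 3"
    using trans[OF left(1)[symmetric] right[of 0]] by simp
  moreover have "(i - 2) mod 3 = Suc (i - ?j) mod 3"
    using trans[OF left(2)[symmetric] right[of 1]] by simp
  ultimately show False
    by (rule Suc_mod_3_eq_imp_neq[THEN notE])
qed

lemma bp_width_mirrored_ramp:
  assumes "length c \<le> 1"
  shows "bp_width (mirrored_ramp i c) = 2 * i + length c"
proof (induction i)
  case 0
  with assms show ?case
    by (cases c) (auto simp: mirrored_ramp_def mod3_ramp_def bp_width_singleton bp_width.simps[of "[]"])
next
  case (Suc i)
  have "bp_width (mirrored_ramp (Suc i) c) = 2 + bp_width (mirrored_ramp i c)"
    using nonoverlapping_border_mirrored_ramp[OF assms, of _ "Suc i"]
    unfolding mirrored_ramp_Suc by (rule bp_width_Cons_snoc)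
  with Suc.IH show ?case
    by simp
qed

lemma f_eqI:
  assumes "length w = n" "set w \<subseteq> {0..<k}" "bp_width w = n"
  shows "f k n = n"
proof -
  let ?S = "{bp_width w | w :: nat list. length w = n \<and> set w \<subseteq> {0..<k}}"
  have "?S \<subseteq> {..n}"
    using bp_width_le_length by auto
  then have "finite ?S"
    by (rule finite_subset) simp
  moreover have "n \<in> ?S"
    using assms by force
  ultimately show ?thesis
    unfolding f_def using \<open>?S \<subseteq> {..n}\<close> by (intro Max_eqI) auto
qed

theorem theorem7:
  fixes n k :: nat
  assumes "k \<ge> 3"
  shows "f k n = n"
proof -
  define c :: "nat list" where "c = (if even n then [] else [0])"
  let ?w = "mirrored_ramp (n div 2) c"
  have c: "length c \<le> 1" "2 * (n div 2) + length c = n"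
    by (auto simp: c_def)
  show ?thesis
  proof (rule f_eqI)
    show "length ?w = n" "bp_width ?w = n"
      using c bp_width_mirrored_ramp by simp_all
    show "set ?w \<subseteq> {0..<k}"
      using set_mirrored_ramp[of "n div 2" c] assms by (auto simp: c_def)
  qed
qed

end
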